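(* Let $(R,\mathfrak{m})$ be a Noetherian local ring, let $f:M\to N$ be a homomorphism of finitely generated $R$-modules, and let $d=1+\mathrm{AR}(\mathfrak{m},\operatorname{im}(f)\subseteq N)$. Then for every $R$-linear map $\epsilon:M\to \mathfrak{m}^dN$, the initial module $(\ker(f+\epsilon))^*$ is a graded subquotient of $(\ker f)^*$, where both initial modules are computed inside $\mathrm{gr}_{\mathfrak{m}}(M)$.
   Context: For a Noetherian ring $R$, an ideal $I$ and finitely generated $R$-modules $N\subseteq M$, the Artin–Rees number $\mathrm{AR}(I,N\subseteq M)$ is the least integer $s$ such that $I^nM\cap N=I^{n-s}(I^sM\cap N)$ for all $n\ge s$. For a finitely generated $R$-module $M$, $\mathrm{gr}_{\mathfrak{m}}(M)=\bigoplus_{i\ge0}\mathfrak{m}^iM/\mathfrak{m}^{i+1}M$, a graded module over $\mathrm{gr}_{\mathfrak{m}}(R)=\bigoplus_{i\ge0}\mathfrak{m}^i/\mathfrak{m}^{i+1}$. For a submodule $L\subseteq M$, the initial module $L^*\subseteq \mathrm{gr}_{\mathfrak{m}}(M)$ is the kernel of the natural graded map $\mathrm{gr}_{\mathfrak{m}}(M)\to\mathrm{gr}_{\mathfrak{m}}(M/L)$; equivalently $L^*=\bigoplus_{i\ge0}(L\cap\mathfrak{m}^iM+\mathfrak{m}^{i+1}M)/\mathfrak{m}^{i+1}M$. "Graded subquotient" means that for every degree $p$, the degree-$p$ component of the first module is (as a $k=R/\mathfrak{m}$-vector space) a subquotient of the degree-$p$ component of the second. *)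

theory Defs
  imports Main "HOL.Modules"
begin

definition ring_ideal :: "'r::comm_ring_1 set \<Rightarrow> bool" where
  "ring_ideal I \<longleftrightarrow> module.subspace (*) I"

definition noetherian_ring :: "'r::comm_ring_1 itself \<Rightarrow> bool" where
  "noetherian_ring _ \<longleftrightarrow>
     (\<forall>I :: 'r set. ring_ideal I \<longrightarrow> (\<exists>S. finite S \<and> module.span (*) S = I))"

definition local_ring :: "'r::comm_ring_1 set \<Rightarrow> bool" where
  "local_ring m \<longleftrightarrow> ring_ideal m \<and> (\<forall>x. x \<notin> m \<longleftrightarrow> x dvd 1)"

definition fin_gen_module :: "('r::comm_ring_1 \<Rightarrow> 'm::ab_group_add \<Rightarrow> 'm) \<Rightarrow> bool" where
  "fin_gen_module s \<longleftrightarrow> (\<exists>S. finite S \<and> module.span s S = UNIV)"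

fun ideal_pow :: "'r::comm_ring_1 set \<Rightarrow> nat \<Rightarrow> 'r set" where
  "ideal_pow I 0 = UNIV"
| "ideal_pow I (Suc k) = module.span (*) {a * b | a b. a \<in> I \<and> b \<in> ideal_pow I k}"

definition ideal_smult :: "('r::comm_ring_1 \<Rightarrow> 'm::ab_group_add \<Rightarrow> 'm) \<Rightarrow> 'r set \<Rightarrow> 'm set \<Rightarrow> 'm set" where
  "ideal_smult s I L = module.span s {s a x | a x. a \<in> I \<and> x \<in> L}"

definition ipow_mod :: "('r::comm_ring_1 \<Rightarrow> 'm::ab_group_add \<Rightarrow> 'm) \<Rightarrow> 'r set \<Rightarrow> nat \<Rightarrow> 'm set \<Rightarrow> 'm set" where
  "ipow_mod s I n L = ideal_smult s (ideal_pow I n) L"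

text \<open>Artin--Rees number AR(I, N' \<subseteq> N), N the whole module type.\<close>
definition AR_number :: "('r::comm_ring_1 \<Rightarrow> 'n::ab_group_add \<Rightarrow> 'n) \<Rightarrow> 'r set \<Rightarrow> 'n set \<Rightarrow> nat" where
  "AR_number s I N' = (LEAST k. \<forall>n\<ge>k.
      ipow_mod s I n UNIV \<inter> N' = ipow_mod s I (n - k) (ipow_mod s I k UNIV \<inter> N'))"

definition set_sum :: "'m::ab_group_add set \<Rightarrow> 'm set \<Rightarrow> 'm set" where
  "set_sum A B = {a + b | a b. a \<in> A \<and> b \<in> B}"

definition coset :: "'m::ab_group_add \<Rightarrow> 'm set \<Rightarrow> 'm set" where
  "coset x Q = {x + q | q. q \<in> Q}"

text \<open>The quotient A/B, as its set of cosets.\<close>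
definition cosets :: "'m::ab_group_add set \<Rightarrow> 'm set \<Rightarrow> 'm set set" where
  "cosets A B = {coset a B | a. a \<in> A}"

text \<open>Module isomorphism C/Q \<cong> A/B (Q \<subseteq> C, B \<subseteq> A submodules of the same module),
 given by an R-linear bijection between the coset sets.\<close>
definition quot_iso :: "('r::comm_ring_1 \<Rightarrow> 'm::ab_group_add \<Rightarrow> 'm) \<Rightarrow> 'm set \<Rightarrow> 'm set \<Rightarrow> 'm set \<Rightarrow> 'm set \<Rightarrow> bool" where
  "quot_iso s C Q A B \<longleftrightarrow> (\<exists>\<phi>. bij_betw \<phi> (cosets C Q) (cosets A B) \<and>
      (\<forall>x\<in>C. \<forall>y\<in>C. \<forall>a b. a \<in> \<phi> (coset x Q) \<longrightarrow> b \<in> \<phi> (coset y Q) \<longrightarrow>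
          a + b \<in> \<phi> (coset (x + y) Q)) \<and>
      (\<forall>x\<in>C. \<forall>r a. a \<in> \<phi> (coset x Q) \<longrightarrow> s r a \<in> \<phi> (coset (s r x) Q)))"

text \<open>Degree-p component of the initial module L^* in gr_m(M), lifted to M:
 L^*_p = initial_comp L p / m^(p+1) M.\<close>
definition initial_comp :: "('r::comm_ring_1 \<Rightarrow> 'm::ab_group_add \<Rightarrow> 'm) \<Rightarrow> 'r set \<Rightarrow> 'm set \<Rightarrow> nat \<Rightarrow> 'm set" where
  "initial_comp s m L p = set_sum (L \<inter> ipow_mod s m p UNIV) (ipow_mod s m (Suc p) UNIV)"

text \<open>L1^* is a graded subquotient of L2^*: for every p, L1^*_p is isomorphic to A/B
 for submodules m^(p+1)M \<subseteq> B \<subseteq> A \<subseteq> initial_comp L2 p, i.e. to a subquotient of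
 L2^*_p (third isomorphism theorem). Since all these modules are annihilated by m,
 R-linear isomorphisms are exactly k-linear isomorphisms.\<close>
definition graded_subquotient :: "('r::comm_ring_1 \<Rightarrow> 'm::ab_group_add \<Rightarrow> 'm) \<Rightarrow> 'r set \<Rightarrow> 'm set \<Rightarrow> 'm set \<Rightarrow> bool" where
  "graded_subquotient s m L1 L2 \<longleftrightarrow> (\<forall>p. \<exists>A B.
      module.subspace s A \<and> module.subspace s B \<and>
      ipow_mod s m (Suc p) UNIV \<subseteq> B \<and> B \<subseteq> A \<and> A \<subseteq> initial_comp s m L2 p \<and>
      quot_iso s (initial_comp s m L1 p) (ipow_mod s m (Suc p) UNIV) A B)"

end

theory Submission
  imports Defs "HOL-Library.Function_Algebras"
begin

text \<open>
  Let \<open>K\<close> be the Artin--Rees number and \<open>x \<in> m^p M\<close> with \<open>f x + \<epsilon> x = 0\<close>. Then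
  \<open>f x = - \<epsilon> x \<in> m^(p+1+K) N \<inter> im f = m^(p+1) (m^K N \<inter> im f) \<subseteq> f (m^(p+1) M)\<close>, so
  \<open>f x = f w\<close> with \<open>w \<in> m^(p+1) M\<close>, and \<open>x - w \<in> ker f \<inter> m^p M\<close> has the same initial
  form as \<open>x\<close>. Hence in each degree the initial module of \<open>ker (f + \<epsilon>)\<close> is even contained in
  that of \<open>ker f\<close>.

  Since the Artin--Rees number is defined by a least-number operator, the argument needs the
  Artin--Rees lemma itself. It follows, as usual, from the Hilbert basis theorem applied to the
  Rees module \<open>\<Sum>\<^sub>n I^n N t^n\<close>: its submodule of sequences with values in \<open>N'\<close> is
  generated in degrees \<open>\<le> k\<close>, which gives the Artin--Rees equality from degree \<open>k\<close> on.
  Rather than constructing the Rees algebra as a ring, modules over it are modelled as abelian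
  groups with a set \<open>Ops\<close> of additive operators (the actions of its generators).
\<close>

section \<open>Subgroups stable under a set of operators\<close>

definition op_subgroup :: "('a::ab_group_add \<Rightarrow> 'a) set \<Rightarrow> 'a set \<Rightarrow> bool" where
  "op_subgroup Ops U \<longleftrightarrow> 0 \<in> U \<and> (\<forall>x\<in>U. \<forall>y\<in>U. x + y \<in> U) \<and> (\<forall>x\<in>U. - x \<in> U)
     \<and> (\<forall>g\<in>Ops. \<forall>x\<in>U. g x \<in> U)"

definition op_span :: "('a::ab_group_add \<Rightarrow> 'a) set \<Rightarrow> 'a set \<Rightarrow> 'a set" where
  "op_span Ops S = op_subgroup Ops hull S"

definition op_noetherian :: "('a::ab_group_add \<Rightarrow> 'a) set \<Rightarrow> 'a set \<Rightarrow> bool" where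
  "op_noetherian Ops H \<longleftrightarrow>
     (\<forall>U. op_subgroup Ops U \<and> U \<subseteq> H \<longrightarrow> (\<exists>W. finite W \<and> op_span Ops W = U))"

lemma op_subgroupI:
  assumes "0 \<in> U" and "\<And>x y. x \<in> U \<Longrightarrow> y \<in> U \<Longrightarrow> x + y \<in> U" and "\<And>x. x \<in> U \<Longrightarrow> - x \<in> U"
    and "\<And>g x. g \<in> Ops \<Longrightarrow> x \<in> U \<Longrightarrow> g x \<in> U"
  shows "op_subgroup Ops U"
  using assms unfolding op_subgroup_def by blast

lemma
  assumes "op_subgroup Ops U"
  shows op_subgroup_zero: "0 \<in> U"
    and op_subgroup_add: "x \<in> U \<Longrightarrow> y \<in> U \<Longrightarrow> x + y \<in> U"
    and op_subgroup_neg: "x \<in> U \<Longrightarrow> - x \<in> U"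
    and op_subgroup_apply: "g \<in> Ops \<Longrightarrow> x \<in> U \<Longrightarrow> g x \<in> U"
  using assms unfolding op_subgroup_def by blast+

lemma op_subgroup_diff: "op_subgroup Ops U \<Longrightarrow> x \<in> U \<Longrightarrow> y \<in> U \<Longrightarrow> x - y \<in> U"
  unfolding diff_conv_add_uminus by (intro op_subgroup_add op_subgroup_neg)

lemma op_subgroup_antimono: "Ops \<subseteq> Ops' \<Longrightarrow> op_subgroup Ops' U \<Longrightarrow> op_subgroup Ops U"
  unfolding op_subgroup_def by auto

lemma op_subgroup_Inter: "(\<And>U. U \<in> \<U> \<Longrightarrow> op_subgroup Ops U) \<Longrightarrow> op_subgroup Ops (\<Inter>\<U>)"
  by (rule op_subgroupI) (auto intro: op_subgroup_zero op_subgroup_add op_subgroup_neg op_subgroup_apply)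

lemma op_subgroup_Int: "op_subgroup Ops A \<Longrightarrow> op_subgroup Ops B \<Longrightarrow> op_subgroup Ops (A \<inter> B)"
  by (rule op_subgroupI) (auto intro: op_subgroup_zero op_subgroup_add op_subgroup_neg op_subgroup_apply)

lemma op_subgroup_singleton_zero:
  "(\<And>g. g \<in> Ops \<Longrightarrow> additive g) \<Longrightarrow> op_subgroup Ops {0}"
  by (rule op_subgroupI) (simp_all add: additive.zero)

lemma op_subgroup_insert:
  "op_subgroup Ops U \<Longrightarrow> (\<And>x. x \<in> U \<Longrightarrow> f x \<in> U) \<Longrightarrow> op_subgroup (insert f Ops) U"
  unfolding op_subgroup_def by blast

lemma op_subgroup_funpow: "op_subgroup Ops U \<Longrightarrow> f \<in> Ops \<Longrightarrow> x \<in> U \<Longrightarrow> (f ^^ k) x \<in> U"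
  by (induction k) (simp_all add: op_subgroup_apply)

lemma op_subgroup_op_span: "op_subgroup Ops (op_span Ops S)"
  unfolding op_span_def by (rule hull_in) (rule op_subgroup_Inter, blast)

lemma op_span_superset: "S \<subseteq> op_span Ops S"
  unfolding op_span_def by (rule hull_subset)

lemma op_span_minimal: "S \<subseteq> U \<Longrightarrow> op_subgroup Ops U \<Longrightarrow> op_span Ops S \<subseteq> U"
  unfolding op_span_def by (rule hull_minimal)

lemma op_span_eq: "op_subgroup Ops U \<Longrightarrow> op_span Ops U = U"
  unfolding op_span_def by (rule hull_same)

lemma op_span_mono: "Ops \<subseteq> Ops' \<Longrightarrow> S \<subseteq> S' \<Longrightarrow> op_span Ops S \<subseteq> op_span Ops' S'"
  by (rule op_span_minimal[OF order_trans[OF _ op_span_superset]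
        op_subgroup_antimono[OF _ op_subgroup_op_span]])

lemma op_span_op_span: "Ops \<subseteq> Ops' \<Longrightarrow> op_span Ops' (op_span Ops S) = op_span Ops' S"
  by (metis op_span_minimal op_span_mono op_span_superset op_subgroup_antimono op_subgroup_op_span
      subset_antisym order_refl)

lemma set_sumI: "a \<in> A \<Longrightarrow> b \<in> B \<Longrightarrow> a + b \<in> set_sum A B"
  unfolding set_sum_def by blast

lemma set_sumE:
  assumes "x \<in> set_sum A B"
  obtains a b where "x = a + b" and "a \<in> A" and "b \<in> B"
  using assms unfolding set_sum_def by blast

lemma op_subgroup_set_sum:
  assumes "\<And>g. g \<in> Ops \<Longrightarrow> additive g" and A: "op_subgroup Ops A" and B: "op_subgroup Ops B"
  shows "op_subgroup Ops (set_sum A B)"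
proof (rule op_subgroupI)
  show "0 \<in> set_sum A B"
    using set_sumI[OF op_subgroup_zero[OF A] op_subgroup_zero[OF B]] by simp
next
  fix x y assume "x \<in> set_sum A B" "y \<in> set_sum A B"
  then obtain a b a' b' where "x = a + b" "y = a' + b'" "a \<in> A" "b \<in> B" "a' \<in> A" "b' \<in> B"
    by (elim set_sumE)
  then show "x + y \<in> set_sum A B"
    using set_sumI[OF op_subgroup_add[OF A, of a a'] op_subgroup_add[OF B, of b b']]
    by (simp add: algebra_simps)
next
  fix x assume "x \<in> set_sum A B"
  then obtain a b where "x = a + b" "a \<in> A" "b \<in> B" by (elim set_sumE)
  then show "- x \<in> set_sum A B"
    using set_sumI[OF op_subgroup_neg[OF A, of a] op_subgroup_neg[OF B, of b]] by simp
next
  fix g x assume g: "g \<in> Ops" and "x \<in> set_sum A B"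
  then obtain a b where "x = a + b" "a \<in> A" "b \<in> B" by (elim set_sumE)
  then show "g x \<in> set_sum A B"
    using set_sumI[OF op_subgroup_apply[OF A g, of a] op_subgroup_apply[OF B g, of b]]
    by (simp add: additive.add[OF assms(1)[OF g]])
qed

lemma op_subgroup_vimage:
  assumes "additive \<phi>" and "\<And>g. g \<in> Ops \<Longrightarrow> \<exists>g'\<in>Ops'. \<forall>x. \<phi> (g x) = g' (\<phi> x)"
    and "op_subgroup Ops' V"
  shows "op_subgroup Ops (\<phi> -` V)"
proof (rule op_subgroupI)
  show "0 \<in> \<phi> -` V"
    using op_subgroup_zero[OF assms(3)] by (simp add: additive.zero[OF assms(1)])
  show "x + y \<in> \<phi> -` V" if "x \<in> \<phi> -` V" "y \<in> \<phi> -` V" for x y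
    using op_subgroup_add[OF assms(3)] that by (simp add: additive.add[OF assms(1)])
  show "- x \<in> \<phi> -` V" if "x \<in> \<phi> -` V" for x
    using op_subgroup_neg[OF assms(3)] that by (simp add: additive.minus[OF assms(1)])
  show "g x \<in> \<phi> -` V" if g: "g \<in> Ops" and x: "x \<in> \<phi> -` V" for g x
  proof -
    obtain g' where "g' \<in> Ops'" "\<phi> (g x) = g' (\<phi> x)" using assms(2)[OF g] by blast
    then show ?thesis using op_subgroup_apply[OF assms(3)] x by simp
  qed
qed

lemma op_subgroup_image:
  assumes "additive \<phi>" and "\<And>g'. g' \<in> Ops' \<Longrightarrow> \<exists>g\<in>Ops. \<forall>x. g' (\<phi> x) = \<phi> (g x)"
    and "op_subgroup Ops U"
  shows "op_subgroup Ops' (\<phi> ` U)"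
proof (rule op_subgroupI)
  have "0 = \<phi> 0" by (simp add: additive.zero[OF assms(1)])
  then show "0 \<in> \<phi> ` U" using op_subgroup_zero[OF assms(3)] by (rule image_eqI)
  show "x + y \<in> \<phi> ` U" if xy: "x \<in> \<phi> ` U" "y \<in> \<phi> ` U" for x y
  proof -
    obtain a b where ab: "a \<in> U" "b \<in> U" "x = \<phi> a" "y = \<phi> b" using xy by blast
    then have "x + y = \<phi> (a + b)" by (simp add: additive.add[OF assms(1)])
    then show ?thesis using op_subgroup_add[OF assms(3) ab(1,2)] by (rule image_eqI)
  qed
  show "- x \<in> \<phi> ` U" if x: "x \<in> \<phi> ` U" for x
  proof -
    obtain a where a: "a \<in> U" "x = \<phi> a" using x by blast
    then have "- x = \<phi> (- a)" by (simp add: additive.minus[OF assms(1)])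
    then show ?thesis using op_subgroup_neg[OF assms(3) a(1)] by (rule image_eqI)
  qed
  show "g' x \<in> \<phi> ` U" if g'x: "g' \<in> Ops'" "x \<in> \<phi> ` U" for g' x
  proof -
    obtain a where "a \<in> U" "x = \<phi> a" using g'x(2) by blast
    moreover obtain g where "g \<in> Ops" "g' (\<phi> a) = \<phi> (g a)" using assms(2)[OF g'x(1)] by blast
    ultimately have "g' x = \<phi> (g a)" "g a \<in> U" using op_subgroup_apply[OF assms(3)] by simp_all
    then show ?thesis by (rule image_eqI)
  qed
qed

lemma op_subgroup_UN_chain:
  fixes L :: "nat \<Rightarrow> 'a::ab_group_add set"
  assumes "\<And>d. op_subgroup Ops (L d)" and "mono L"
  shows "op_subgroup Ops (\<Union>d. L d)"
proof (rule op_subgroupI)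
  show "0 \<in> (\<Union>d. L d)" using op_subgroup_zero[OF assms(1)] by blast
  show "x + y \<in> (\<Union>d. L d)" if xy: "x \<in> (\<Union>d. L d)" "y \<in> (\<Union>d. L d)" for x y
  proof -
    obtain d e where "x \<in> L d" "y \<in> L e" using xy by blast
    then have "x \<in> L (max d e)" "y \<in> L (max d e)"
      using monoD[OF assms(2), of d "max d e"] monoD[OF assms(2), of e "max d e"] by auto
    then show ?thesis using op_subgroup_add[OF assms(1)] by blast
  qed
  show "- x \<in> (\<Union>d. L d)" if "x \<in> (\<Union>d. L d)" for x
    using that op_subgroup_neg[OF assms(1)] by blast
  show "g x \<in> (\<Union>d. L d)" if "g \<in> Ops" "x \<in> (\<Union>d. L d)" for g x
    using that op_subgroup_apply[OF assms(1)] by blast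
qed

lemma op_noetherian_chain_stable:
  fixes L :: "nat \<Rightarrow> 'a::ab_group_add set"
  assumes "op_noetherian Ops H" and "\<And>d. op_subgroup Ops (L d)" and "\<And>d. L d \<subseteq> H" and "mono L"
  obtains D where "\<And>d. D \<le> d \<Longrightarrow> L d = L D"
proof -
  obtain C where C: "finite C" "op_span Ops C = (\<Union>d. L d)"
    using assms op_subgroup_UN_chain unfolding op_noetherian_def by (metis UN_least)
  have "\<forall>c\<in>C. \<exists>d. c \<in> L d" using C(2) op_span_superset by blast
  then obtain dd where dd: "\<And>c. c \<in> C \<Longrightarrow> c \<in> L (dd c)" by metis
  define D where "D = Max (insert 0 (dd ` C))"
  have "C \<subseteq> L D"
  proof
    fix c assume c: "c \<in> C"
    have "dd c \<le> D" unfolding D_def using C(1) c by simp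
    then show "c \<in> L D" using dd[OF c] monoD[OF assms(4)] by blast
  qed
  then have "(\<Union>d. L d) \<subseteq> L D" using C(2) op_span_minimal assms(2) by metis
  then show thesis using monoD[OF assms(4)] by (intro that) blast
qed

lemma op_noetherian_image:
  assumes "additive \<phi>" and "\<And>g. g \<in> Ops \<Longrightarrow> \<exists>g'\<in>Ops'. \<forall>x. \<phi> (g x) = g' (\<phi> x)"
    and "op_subgroup Ops H" and "op_noetherian Ops H"
  shows "op_noetherian Ops' (\<phi> ` H)"
  unfolding op_noetherian_def
proof (intro allI impI, elim conjE)
  fix U assume U: "op_subgroup Ops' U" "U \<subseteq> \<phi> ` H"
  have "op_subgroup Ops (H \<inter> \<phi> -` U)"
    by (rule op_subgroup_Int[OF assms(3) op_subgroup_vimage[OF assms(1,2) U(1)]])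
  then obtain W where W: "finite W" "op_span Ops W = H \<inter> \<phi> -` U"
    using assms(4) unfolding op_noetherian_def by blast
  have "op_span Ops' (\<phi> ` W) = U"
  proof
    show "op_span Ops' (\<phi> ` W) \<subseteq> U"
      using W(2) op_span_superset[of W Ops] by (intro op_span_minimal[OF _ U(1)]) blast
    have "op_span Ops W \<subseteq> \<phi> -` op_span Ops' (\<phi> ` W)"
      using op_span_superset[of "\<phi> ` W" Ops']
      by (intro op_span_minimal op_subgroup_vimage[OF assms(1,2) op_subgroup_op_span]) blast+
    show "U \<subseteq> op_span Ops' (\<phi> ` W)"
    proof
      fix u assume u: "u \<in> U"
      then obtain x where x: "x \<in> H" "u = \<phi> x" using U(2) by blast
      then have "x \<in> op_span Ops W" unfolding W(2) using u by simp
      then show "u \<in> op_span Ops' (\<phi> ` W)" using \<open>op_span Ops W \<subseteq> _\<close> x(2) by blast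
    qed
  qed
  then show "\<exists>W. finite W \<and> op_span Ops' W = U" using W(1) by blast
qed

section \<open>The Hilbert basis theorem\<close>

locale operator_extension =
  fixes Ops :: "('a::ab_group_add \<Rightarrow> 'a) set" and T :: "'a \<Rightarrow> 'a" and H :: "'a set"
  assumes additive_Ops: "g \<in> Ops \<Longrightarrow> additive g"
    and additive_T: "additive T"
    and Ops_commute_T: "g \<in> Ops \<Longrightarrow> g (T x) = T (g x)"
    and op_subgroup_H: "op_subgroup Ops H"
begin

lemma additive_funpow_T: "additive (T ^^ k)"
  by (induction k) (simp_all add: additive_def additive.add[OF additive_T])

lemma Ops_commute_funpow_T: "g \<in> Ops \<Longrightarrow> g ((T ^^ k) x) = (T ^^ k) (g x)"
  by (induction k) (simp_all add: Ops_commute_T)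

lemma funpow_T_intertwines_Ops:
  "g \<in> Ops \<Longrightarrow> \<exists>g'\<in>Ops. \<forall>x. (T ^^ k) (g x) = g' ((T ^^ k) x)"
  "g \<in> Ops \<Longrightarrow> \<exists>g'\<in>Ops. \<forall>x. g ((T ^^ k) x) = (T ^^ k) (g' x)"
  using Ops_commute_funpow_T by (intro bexI[of _ g]; simp)+

text \<open>The \<open>T\<close>-polynomials of degree \<open>< d\<close> with coefficients in \<open>H\<close>.\<close>

fun polys :: "nat \<Rightarrow> 'a set" where
  "polys 0 = {0}"
| "polys (Suc d) = set_sum ((T ^^ d) ` H) (polys d)"

lemma op_subgroup_polys: "op_subgroup Ops (polys d)"
proof (induction d)
  case 0
  show ?case using op_subgroup_singleton_zero[OF additive_Ops] by simp
next
  case (Suc d)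
  have "op_subgroup Ops ((T ^^ d) ` H)"
    by (rule op_subgroup_image[OF additive_funpow_T funpow_T_intertwines_Ops(2) op_subgroup_H])
  then show ?case using op_subgroup_set_sum[OF additive_Ops _ Suc] by simp
qed

lemma polys_Suc_superset: "polys d \<subseteq> polys (Suc d)"
proof
  fix p assume "p \<in> polys d"
  then have "(T ^^ d) 0 + p \<in> polys (Suc d)"
    using op_subgroup_zero[OF op_subgroup_H] by (simp add: set_sumI)
  then show "p \<in> polys (Suc d)" by (simp add: additive.zero[OF additive_funpow_T])
qed

lemma mono_polys: "mono polys"
  unfolding mono_iff_le_Suc using polys_Suc_superset by blast

lemma T_polys: "p \<in> polys d \<Longrightarrow> T p \<in> polys (Suc d)"
proof (induction d arbitrary: p)
  case 0
  then show ?case using polys_Suc_superset[of 0] additive.zero[OF additive_T] by auto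
next
  case (Suc d)
  then obtain h q where hq: "p = (T ^^ d) h + q" "h \<in> H" "q \<in> polys d" by (auto elim: set_sumE)
  have "T p = (T ^^ Suc d) h + T q" unfolding hq(1) by (simp add: additive.add[OF additive_T])
  then show ?case using set_sumI[OF imageI[OF hq(2)] Suc.IH[OF hq(3)]] by simp
qed

lemma funpow_T_polys: "p \<in> polys d \<Longrightarrow> (T ^^ k) p \<in> polys (d + k)"
  by (induction k) (simp_all add: T_polys del: polys.simps)

lemma op_span_subset_UN_polys: "op_span (insert T Ops) H \<subseteq> (\<Union>d. polys d)"
proof (rule op_span_minimal)
  show "H \<subseteq> (\<Union>d. polys d)"
  proof
    fix h assume "h \<in> H"
    then have "(T ^^ 0) h + 0 \<in> polys (Suc 0)"
      unfolding polys.simps(2) by (intro set_sumI imageI) simp_all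
    then show "h \<in> (\<Union>d. polys d)" by (auto simp del: polys.simps)
  qed
  show "op_subgroup (insert T Ops) (\<Union>d. polys d)"
    using T_polys by (intro op_subgroup_insert op_subgroup_UN_chain op_subgroup_polys mono_polys) blast
qed

text \<open>The coefficients of \<open>T^d\<close> of the elements of \<open>U\<close> of degree \<open>\<le> d\<close>.\<close>

definition lead_coeffs :: "'a set \<Rightarrow> nat \<Rightarrow> 'a set" where
  "lead_coeffs U d = H \<inter> (T ^^ d) -` set_sum U (polys d)"

lemma op_subgroup_lead_coeffs:
  assumes "op_subgroup (insert T Ops) U"
  shows "op_subgroup Ops (lead_coeffs U d)"
proof -
  have "op_subgroup Ops (set_sum U (polys d))"
    using op_subgroup_antimono[OF subset_insertI assms]
    by (intro op_subgroup_set_sum[OF additive_Ops _ op_subgroup_polys])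
  then show ?thesis
    unfolding lead_coeffs_def
    by (intro op_subgroup_Int[OF op_subgroup_H] op_subgroup_vimage[OF additive_funpow_T
          funpow_T_intertwines_Ops(1)])
qed

lemma mono_lead_coeffs:
  assumes "op_subgroup (insert T Ops) U"
  shows "mono (lead_coeffs U)"
  unfolding mono_iff_le_Suc
proof (intro allI subsetI)
  fix d c assume "c \<in> lead_coeffs U d"
  then have c: "c \<in> H" "(T ^^ d) c \<in> set_sum U (polys d)" unfolding lead_coeffs_def by simp_all
  then obtain u p where up: "(T ^^ d) c = u + p" "u \<in> U" "p \<in> polys d" by (blast elim: set_sumE)
  have "(T ^^ Suc d) c = T u + T p" using up(1) by (simp add: additive.add[OF additive_T])
  moreover have "T u + T p \<in> set_sum U (polys (Suc d))"
    using op_subgroup_apply[OF assms _ up(2)] T_polys[OF up(3)] by (intro set_sumI) simp_all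
  ultimately show "c \<in> lead_coeffs U (Suc d)" unfolding lead_coeffs_def using c(1) by simp
qed

lemma lead_coeffs_witness:
  assumes "c \<in> lead_coeffs U d"
  obtains u where "u \<in> U" and "u - (T ^^ d) c \<in> polys d"
proof -
  obtain u p where up: "(T ^^ d) c = u + p" "u \<in> U" "p \<in> polys d"
    using assms unfolding lead_coeffs_def by (blast elim: set_sumE)
  have "u - (T ^^ d) c = - p" using up(1) by simp
  then have "u - (T ^^ d) c \<in> polys d" using op_subgroup_neg[OF op_subgroup_polys up(3)] by simp
  with up(2) show thesis by (rule that)
qed

lemma funpow_op_span_subset:
  assumes "e \<le> d" and "\<And>c. c \<in> G \<Longrightarrow> w c \<in> S \<and> w c - (T ^^ e) c \<in> polys e"
  shows "(T ^^ d) ` op_span Ops G \<subseteq> set_sum (op_span (insert T Ops) S) (polys d)"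
proof -
  let ?V = "set_sum (op_span (insert T Ops) S) (polys d)"
  have "op_subgroup Ops ?V"
    using op_subgroup_antimono[OF subset_insertI op_subgroup_op_span]
    by (intro op_subgroup_set_sum[OF additive_Ops _ op_subgroup_polys])
  then have V: "op_subgroup Ops ((T ^^ d) -` ?V)"
    by (intro op_subgroup_vimage[OF additive_funpow_T funpow_T_intertwines_Ops(1)])
  have "G \<subseteq> (T ^^ d) -` ?V"
  proof
    fix c assume "c \<in> G"
    then have w: "w c \<in> S" "w c - (T ^^ e) c \<in> polys e" using assms(2) by blast+
    have "(T ^^ (d - e)) (w c) \<in> op_span (insert T Ops) S"
      using op_subgroup_funpow[OF op_subgroup_op_span _ op_span_superset[THEN subsetD, OF w(1)]]
      by blast
    moreover have "- (T ^^ (d - e)) (w c - (T ^^ e) c) \<in> polys d"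
      using op_subgroup_neg[OF op_subgroup_polys funpow_T_polys[OF w(2), of "d - e"]] assms(1) by simp
    ultimately have "(T ^^ (d - e)) (w c) + - (T ^^ (d - e)) (w c - (T ^^ e) c) \<in> ?V"
      by (rule set_sumI)
    moreover have "(T ^^ d) c = (T ^^ (d - e)) ((T ^^ e) c)"
      using assms(1) by (metis funpow_add le_add_diff_inverse2 comp_apply)
    then have "(T ^^ d) c = (T ^^ (d - e)) (w c) + - (T ^^ (d - e)) (w c - (T ^^ e) c)"
      by (simp add: additive.diff[OF additive_funpow_T])
    ultimately show "c \<in> (T ^^ d) -` ?V" by simp
  qed
  then show ?thesis using op_span_minimal[OF _ V] by blast
qed

lemma Int_polys_subset_op_span:
  assumes U: "op_subgroup (insert T Ops) U" and W: "op_span (insert T Ops) W \<subseteq> U"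
    and lead: "\<And>d c. c \<in> lead_coeffs U d \<Longrightarrow>
      (T ^^ d) c \<in> set_sum (op_span (insert T Ops) W) (polys d)"
  shows "U \<inter> polys d \<subseteq> op_span (insert T Ops) W"
proof (induction d)
  case 0
  show ?case using op_subgroup_zero[OF op_subgroup_op_span] by auto
next
  case (Suc d)
  show ?case
  proof
    fix u assume "u \<in> U \<inter> polys (Suc d)"
    then obtain c p where u: "u \<in> U" "u = (T ^^ d) c + p" "c \<in> H" "p \<in> polys d"
      by (auto elim!: set_sumE)
    have "(T ^^ d) c = u + - p" using u(2) by simp
    also have "\<dots> \<in> set_sum U (polys d)"
      using u(1) op_subgroup_neg[OF op_subgroup_polys u(4)] by (rule set_sumI)
    finally have "c \<in> lead_coeffs U d" unfolding lead_coeffs_def using u(3) by simp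
    then obtain v q where vq: "(T ^^ d) c = v + q" "v \<in> op_span (insert T Ops) W" "q \<in> polys d"
      using lead by (blast elim: set_sumE)
    have "u - v \<in> U" using op_subgroup_diff[OF U u(1)] W vq(2) by blast
    moreover have "u - v = p + q" using u(2) vq(1) by simp
    ultimately have "u - v \<in> U \<inter> polys d"
      using op_subgroup_add[OF op_subgroup_polys u(4) vq(3)] by simp
    then have "(u - v) + v \<in> op_span (insert T Ops) W"
      using Suc.IH vq(2) op_subgroup_add[OF op_subgroup_op_span] by blast
    then show "u \<in> op_span (insert T Ops) W" by simp
  qed
qed

theorem op_noetherian_op_span_insert:
  assumes "op_noetherian Ops H"
  shows "op_noetherian (insert T Ops) (op_span (insert T Ops) H)"
  unfolding op_noetherian_def
proof (intro allI impI, elim conjE)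
  fix U assume U: "op_subgroup (insert T Ops) U" and U_sub: "U \<subseteq> op_span (insert T Ops) H"
  let ?L = "lead_coeffs U"
  have L_sub: "?L d \<subseteq> H" for d unfolding lead_coeffs_def by blast
  obtain D where D: "\<And>d. D \<le> d \<Longrightarrow> ?L d = ?L D"
    using op_noetherian_chain_stable[OF assms op_subgroup_lead_coeffs[OF U] L_sub mono_lead_coeffs[OF U]]
    by blast
  have "\<forall>d. \<exists>G. finite G \<and> op_span Ops G = ?L d"
    using assms op_subgroup_lead_coeffs[OF U] L_sub unfolding op_noetherian_def by blast
  then obtain G where G: "\<And>d. finite (G d)" "\<And>d. op_span Ops (G d) = ?L d" by metis
  have "\<forall>d c. \<exists>u. c \<in> ?L d \<longrightarrow> u \<in> U \<and> u - (T ^^ d) c \<in> polys d"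
    using lead_coeffs_witness by metis
  then obtain w where w: "\<And>d c. c \<in> ?L d \<Longrightarrow> w d c \<in> U \<and> w d c - (T ^^ d) c \<in> polys d"
    by metis
  define W where "W = (\<Union>d\<le>D. w d ` G d)"
  have G_L: "G d \<subseteq> ?L d" for d using G(2) op_span_superset by blast
  have "W \<subseteq> U" unfolding W_def using w G_L by blast
  then have span_W: "op_span (insert T Ops) W \<subseteq> U" by (rule op_span_minimal[OF _ U])
  have "(T ^^ d) c \<in> set_sum (op_span (insert T Ops) W) (polys d)" if c: "c \<in> ?L d" for d c
  proof -
    define e where "e = min d D"
    have "?L d = ?L e" using D[of d] unfolding e_def by (cases "D \<le> d") simp_all
    then have "c \<in> op_span Ops (G e)" using c G(2) by simp
    moreover have "w e x \<in> W \<and> w e x - (T ^^ e) x \<in> polys e" if "x \<in> G e" for x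
      using w[of x e] G_L[of e] that unfolding W_def e_def by auto
    ultimately show ?thesis using funpow_op_span_subset[of e d "G e" "w e" W] by (auto simp: e_def)
  qed
  then have "U \<inter> polys d \<subseteq> op_span (insert T Ops) W" for d
    by (rule Int_polys_subset_op_span[OF U span_W])
  then have "U \<subseteq> op_span (insert T Ops) W" using U_sub op_span_subset_UN_polys by blast
  moreover have "finite W" unfolding W_def using G(1) by simp
  ultimately show "\<exists>W. finite W \<and> op_span (insert T Ops) W = U" using span_W by blast
qed

end

section \<open>Finitely generated modules over a Noetherian ring\<close>

lemma module_mult: "module ((*) :: 'a::comm_ring_1 \<Rightarrow> 'a \<Rightarrow> 'a)"
  by unfold_locales (simp_all add: algebra_simps)

context module
begin

lemma additive_scale: "additive (scale r)"
  by unfold_locales (rule scale_right_distrib)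

lemma additive_scale_left: "additive (\<lambda>c. scale c x)"
  by unfold_locales (rule scale_left_distrib)

lemma op_subgroup_range_scale_iff: "op_subgroup (range scale) U \<longleftrightarrow> subspace U"
proof
  assume U: "op_subgroup (range scale) U"
  show "subspace U"
    unfolding subspace_def using op_subgroup_zero[OF U] op_subgroup_add[OF U] op_subgroup_apply[OF U]
    by blast
next
  assume "subspace U"
  then show "op_subgroup (range scale) U"
    by (intro op_subgroupI) (auto intro: subspace_0 subspace_add subspace_neg subspace_scale)
qed

lemma op_span_range_scale: "op_span (range scale) S = span S"
proof -
  have "op_subgroup (range scale) = subspace" using op_subgroup_range_scale_iff by (rule ext)
  then show ?thesis unfolding op_span_def span_def by simp
qed

lemma op_noetherian_span_empty: "op_noetherian (range scale) (span {})"
  unfolding op_noetherian_def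
proof (intro allI impI, elim conjE)
  fix U assume "op_subgroup (range scale) U" "U \<subseteq> span {}"
  then have "U = span {}" using op_subgroup_zero by fastforce
  then show "\<exists>W. finite W \<and> op_span (range scale) W = U" by (auto simp: op_span_range_scale)
qed

lemma op_subgroup_set_sum_range_scale:
  "op_subgroup (range scale) A \<Longrightarrow> op_subgroup (range scale) B \<Longrightarrow>
    op_subgroup (range scale) (set_sum A B)"
  using additive_scale by (intro op_subgroup_set_sum) auto

lemma op_subgroup_vimage_scale_left:
  "op_subgroup (range scale) V \<Longrightarrow> op_subgroup (range (*)) ((\<lambda>c. scale c e) -` V)"
  by (rule op_subgroup_vimage[OF additive_scale_left]) auto

lemma subset_op_span_of_coeffs:
  assumes U: "op_subgroup (range scale) U" and U_sub: "U \<subseteq> span (insert e S)"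
    and W_U: "op_span (range scale) W \<subseteq> U" and low: "U \<inter> span S \<subseteq> op_span (range scale) W"
    and coeff: "(\<lambda>c. scale c e) -` set_sum U (span S) \<subseteq>
      (\<lambda>c. scale c e) -` set_sum (op_span (range scale) W) (span S)"
  shows "U \<subseteq> op_span (range scale) W"
proof
  fix x assume x: "x \<in> U"
  then obtain k where h: "x - scale k e \<in> span S" using U_sub span_breakdown_eq by blast
  have "x + - (x - scale k e) \<in> set_sum U (span S)" using x span_neg[OF h] by (rule set_sumI)
  then have "scale k e \<in> set_sum (op_span (range scale) W) (span S)" using coeff by auto
  then obtain v h' where vh': "scale k e = v + h'" "v \<in> op_span (range scale) W" "h' \<in> span S"
    by (rule set_sumE)
  have "x - v = (x - scale k e) + h'" using vh'(1) by simp
  then have "x - v \<in> span S" using span_add[OF h vh'(3)] by (simp only:)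
  moreover have "x - v \<in> U" using op_subgroup_diff[OF U x] W_U vh'(2) by blast
  ultimately have "x - v \<in> op_span (range scale) W" using low by blast
  then have "(x - v) + v \<in> op_span (range scale) W"
    using vh'(2) by (rule op_subgroup_add[OF op_subgroup_op_span])
  then show "x \<in> op_span (range scale) W" by simp
qed

lemma op_noetherian_span_insert:
  assumes R: "op_noetherian (range ((*) :: 'a \<Rightarrow> 'a \<Rightarrow> 'a)) UNIV"
    and S: "op_noetherian (range scale) (span S)"
  shows "op_noetherian (range scale) (span (insert e S))"
  unfolding op_noetherian_def
proof (intro allI impI, elim conjE)
  fix U assume U: "op_subgroup (range scale) U" and U_sub: "U \<subseteq> span (insert e S)"
  have span_S: "op_subgroup (range scale) (span S)" using op_subgroup_range_scale_iff by simp
  define J where "J = (\<lambda>c. scale c e) -` set_sum U (span S)"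
  have "op_subgroup (range (*)) J"
    unfolding J_def by (rule op_subgroup_vimage_scale_left[OF op_subgroup_set_sum_range_scale[OF U span_S]])
  then obtain C where C: "finite C" "op_span (range (*)) C = J"
    using R unfolding op_noetherian_def by blast
  have "\<exists>u. u \<in> U \<and> scale c e - u \<in> span S" if "c \<in> J" for c
  proof -
    from that have "scale c e \<in> set_sum U (span S)" unfolding J_def by simp
    then obtain u h where "scale c e = u + h" "u \<in> U" "h \<in> span S" by (rule set_sumE)
    then show ?thesis by (intro exI[of _ u]) simp
  qed
  then obtain u where u: "\<And>c. c \<in> J \<Longrightarrow> u c \<in> U \<and> scale c e - u c \<in> span S" by metis
  obtain W1 where W1: "finite W1" "op_span (range scale) W1 = U \<inter> span S"
    using S op_subgroup_Int[OF U span_S] unfolding op_noetherian_def by blast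
  define W where "W = W1 \<union> u ` C"
  have C_J: "C \<subseteq> J" using C(2) op_span_superset by blast
  have "W1 \<subseteq> U" using W1(2) op_span_superset[of W1 "range scale"] by blast
  moreover have "u ` C \<subseteq> U" using u C_J by blast
  ultimately have "W \<subseteq> U" unfolding W_def by blast
  then have span_W: "op_span (range scale) W \<subseteq> U" by (rule op_span_minimal[OF _ U])
  have "J \<subseteq> (\<lambda>c. scale c e) -` set_sum (op_span (range scale) W) (span S)"
    unfolding C(2)[symmetric]
  proof (rule op_span_minimal)
    show "C \<subseteq> (\<lambda>c. scale c e) -` set_sum (op_span (range scale) W) (span S)"
    proof
      fix c assume c: "c \<in> C"
      then have "u c \<in> W" unfolding W_def by blast
      then have "u c \<in> op_span (range scale) W" using op_span_superset by blast
      moreover have "scale c e - u c \<in> span S" using u C_J c by blast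
      ultimately have "u c + (scale c e - u c) \<in> set_sum (op_span (range scale) W) (span S)"
        by (rule set_sumI)
      then show "c \<in> (\<lambda>c. scale c e) -` set_sum (op_span (range scale) W) (span S)" by simp
    qed
    show "op_subgroup (range (*)) ((\<lambda>c. scale c e) -` set_sum (op_span (range scale) W) (span S))"
      by (intro op_subgroup_vimage_scale_left op_subgroup_set_sum_range_scale op_subgroup_op_span span_S)
  qed
  moreover have "U \<inter> span S \<subseteq> op_span (range scale) W"
    using W1(2) op_span_mono[of "range scale" _ W1 W] unfolding W_def by blast
  ultimately have "U \<subseteq> op_span (range scale) W"
    using span_W unfolding J_def by (intro subset_op_span_of_coeffs[OF U U_sub])
  then show "\<exists>W. finite W \<and> op_span (range scale) W = U"
    using span_W W1(1) C(1) unfolding W_def by blast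
qed

lemma op_noetherian_span:
  assumes "op_noetherian (range ((*) :: 'a \<Rightarrow> 'a \<Rightarrow> 'a)) UNIV" and "finite S"
  shows "op_noetherian (range scale) (span S)"
  using assms(2)
proof (induction S rule: finite_induct)
  case empty
  show ?case by (rule op_noetherian_span_empty)
next
  case (insert e S)
  show ?case by (rule op_noetherian_span_insert[OF assms(1) insert.IH])
qed

end

lemma op_noetherian_ring:
  assumes "noetherian_ring TYPE('r::comm_ring_1)"
  shows "op_noetherian (range ((*) :: 'r \<Rightarrow> 'r \<Rightarrow> 'r)) UNIV"
  using assms
  unfolding noetherian_ring_def ring_ideal_def op_noetherian_def
    module.op_subgroup_range_scale_iff[OF module_mult] module.op_span_range_scale[OF module_mult]
  by blast

lemma op_noetherian_fin_gen_module:
  assumes "module s" and "noetherian_ring TYPE('r::comm_ring_1)"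
    and "fin_gen_module (s :: 'r \<Rightarrow> 'm::ab_group_add \<Rightarrow> 'm)"
  shows "op_noetherian (range s) UNIV"
  using assms(3) module.op_noetherian_span[OF assms(1) op_noetherian_ring[OF assms(2)]]
  unfolding fin_gen_module_def by metis

section \<open>Powers of an ideal\<close>

lemma subspace_ideal_pow: "module.subspace (*) (ideal_pow I n)"
  by (cases n) (simp_all add: module.subspace_UNIV[OF module_mult] module.subspace_span[OF module_mult])

lemma mult_mem_ideal_pow_Suc: "a \<in> I \<Longrightarrow> b \<in> ideal_pow I n \<Longrightarrow> a * b \<in> ideal_pow I (Suc n)"
  by (auto intro: module.span_base[OF module_mult])

lemma ideal_pow_Suc_minimal:
  assumes "module.subspace (*) Q" and "\<And>a b. a \<in> I \<Longrightarrow> b \<in> ideal_pow I n \<Longrightarrow> a * b \<in> Q"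
  shows "ideal_pow I (Suc n) \<subseteq> Q"
  unfolding ideal_pow.simps using assms(2) by (intro module.span_minimal[OF module_mult _ assms(1)]) blast

lemma ideal_pow_Suc_subset: "ideal_pow I (Suc n) \<subseteq> ideal_pow I n"
  by (rule ideal_pow_Suc_minimal[OF subspace_ideal_pow])
    (rule module.subspace_scale[OF module_mult subspace_ideal_pow])

context module
begin

lemma subspace_ipow_mod: "subspace (ipow_mod scale I n L)"
  unfolding ipow_mod_def ideal_smult_def by (rule subspace_span)

lemma scale_mem_ipow_mod: "c \<in> ideal_pow I n \<Longrightarrow> x \<in> L \<Longrightarrow> scale c x \<in> ipow_mod scale I n L"
  unfolding ipow_mod_def ideal_smult_def by (intro span_base) blast

lemma ipow_mod_minimal:
  "subspace V \<Longrightarrow> (\<And>c x. c \<in> ideal_pow I n \<Longrightarrow> x \<in> L \<Longrightarrow> scale c x \<in> V) \<Longrightarrow>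
    ipow_mod scale I n L \<subseteq> V"
  unfolding ipow_mod_def ideal_smult_def by (intro span_minimal) auto

lemma ipow_mod_0_superset: "L \<subseteq> ipow_mod scale I 0 L"
  using scale_mem_ipow_mod[of 1 I 0 _ L] by auto

lemma ipow_mod_subset: "subspace L \<Longrightarrow> ipow_mod scale I n L \<subseteq> L"
  by (rule ipow_mod_minimal) (simp_all add: subspace_scale)

lemma ipow_mod_mono: "L \<subseteq> L' \<Longrightarrow> ipow_mod scale I n L \<subseteq> ipow_mod scale I n L'"
  by (rule ipow_mod_minimal[OF subspace_ipow_mod]) (auto intro: scale_mem_ipow_mod)

lemma ipow_mod_Suc_subset: "ipow_mod scale I (Suc n) L \<subseteq> ipow_mod scale I n L"
  using ideal_pow_Suc_subset
  by (intro ipow_mod_minimal[OF subspace_ipow_mod]) (auto intro: scale_mem_ipow_mod)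

lemma ipow_mod_Suc_scale:
  assumes "a \<in> I" and "z \<in> ipow_mod scale I n L"
  shows "scale a z \<in> ipow_mod scale I (Suc n) L"
proof -
  have "ipow_mod scale I n L \<subseteq> scale a -` ipow_mod scale I (Suc n) L"
  proof (rule ipow_mod_minimal)
    show "subspace (scale a -` ipow_mod scale I (Suc n) L)"
      by (rule module_hom.subspace_vimage[OF module_hom_scale_self subspace_ipow_mod])
    show "scale c x \<in> scale a -` ipow_mod scale I (Suc n) L" if "c \<in> ideal_pow I n" "x \<in> L" for c x
      using scale_mem_ipow_mod[OF mult_mem_ideal_pow_Suc[OF assms(1) that(1)] that(2)] by simp
  qed
  then show ?thesis using assms(2) by blast
qed

lemma ipow_mod_scale:
  "c \<in> ideal_pow I i \<Longrightarrow> x \<in> ipow_mod scale I j L \<Longrightarrow> scale c x \<in> ipow_mod scale I (i + j) L"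
proof (induction i arbitrary: c x)
  case 0
  then show ?case by (simp add: subspace_scale[OF subspace_ipow_mod])
next
  case (Suc i)
  let ?Q = "\<Inter>x\<in>ipow_mod scale I j L. (\<lambda>c. scale c x) -` ipow_mod scale I (Suc i + j) L"
  have "ideal_pow I (Suc i) \<subseteq> ?Q"
  proof (rule ideal_pow_Suc_minimal)
    show "module.subspace (*) ?Q"
      by (intro module.subspace_Int[OF module_mult]
          module_hom.subspace_vimage[OF module_hom_scale_left subspace_ipow_mod])
    show "a * b \<in> ?Q" if "a \<in> I" "b \<in> ideal_pow I i" for a b
      using ipow_mod_Suc_scale[OF that(1) Suc.IH[OF that(2)]] by simp
  qed
  then show ?case using Suc.prems by blast
qed

lemma ipow_mod_ipow_mod_subset:
  "ipow_mod scale I i (ipow_mod scale I j L) \<subseteq> ipow_mod scale I (i + j) L"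
  by (rule ipow_mod_minimal[OF subspace_ipow_mod]) (rule ipow_mod_scale)

end

lemma ipow_mod_image:
  assumes "module_hom s1 s2 f"
  shows "f ` ipow_mod s1 I n L = ipow_mod s2 I n (f ` L)"
proof -
  have "f ` {s1 c x | c x. c \<in> ideal_pow I n \<and> x \<in> L} = {s2 c y | c y. c \<in> ideal_pow I n \<and> y \<in> f ` L}"
  proof (intro set_eqI iffI)
    fix y assume "y \<in> f ` {s1 c x | c x. c \<in> ideal_pow I n \<and> x \<in> L}"
    then obtain c x where "y = f (s1 c x)" "c \<in> ideal_pow I n" "x \<in> L" by blast
    then show "y \<in> {s2 c y | c y. c \<in> ideal_pow I n \<and> y \<in> f ` L}"
      by (auto simp: module_hom.scale[OF assms])
  next
    fix y assume "y \<in> {s2 c y | c y. c \<in> ideal_pow I n \<and> y \<in> f ` L}"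
    then obtain c x where "y = s2 c (f x)" "c \<in> ideal_pow I n" "x \<in> L" by blast
    then show "y \<in> f ` {s1 c x | c x. c \<in> ideal_pow I n \<and> x \<in> L}"
      by (auto simp: module_hom.scale[OF assms, symmetric])
  qed
  then show ?thesis
    unfolding ipow_mod_def ideal_smult_def by (simp flip: module_hom.span_image[OF assms])
qed

section \<open>The Rees module and the Artin--Rees lemma\<close>

text \<open>
  A sequence \<open>g\<close> stands for \<open>\<Sum>\<^sub>n g n t^n\<close>. If \<open>as = [a\<^sub>1, \<dots>, a\<^sub>r]\<close>
  generates \<open>I\<close>, the Rees algebra \<open>R[a\<^sub>1 t, \<dots>, a\<^sub>r t]\<close> acts through \<open>rees_scale\<close>
  (the coefficients) and \<open>rees_shift a\<^sub>i\<close> (multiplication by \<open>a\<^sub>i t\<close>).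
\<close>

definition rees_scale :: "('r \<Rightarrow> 'n::ab_group_add \<Rightarrow> 'n) \<Rightarrow> 'r \<Rightarrow> (nat \<Rightarrow> 'n) \<Rightarrow> nat \<Rightarrow> 'n" where
  "rees_scale s r g = (\<lambda>n. s r (g n))"

definition rees_shift :: "('r \<Rightarrow> 'n::ab_group_add \<Rightarrow> 'n) \<Rightarrow> 'r \<Rightarrow> (nat \<Rightarrow> 'n) \<Rightarrow> nat \<Rightarrow> 'n" where
  "rees_shift s a g = (\<lambda>n. case n of 0 \<Rightarrow> 0 | Suc k \<Rightarrow> s a (g k))"

definition rees_single :: "nat \<Rightarrow> 'n::zero \<Rightarrow> nat \<Rightarrow> 'n" where
  "rees_single k x = (\<lambda>n. if n = k then x else 0)"

definition rees_ops :: "('r \<Rightarrow> 'n::ab_group_add \<Rightarrow> 'n) \<Rightarrow> 'r list \<Rightarrow> ((nat \<Rightarrow> 'n) \<Rightarrow> nat \<Rightarrow> 'n) set" where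
  "rees_ops s as = range (rees_scale s) \<union> rees_shift s ` set as"

definition rees_module :: "('r \<Rightarrow> 'n::ab_group_add \<Rightarrow> 'n) \<Rightarrow> 'r list \<Rightarrow> (nat \<Rightarrow> 'n) set" where
  "rees_module s as = op_span (rees_ops s as) (range (rees_single 0))"

lemma rees_ops_Cons: "rees_ops s (a # as) = insert (rees_shift s a) (rees_ops s as)"
  unfolding rees_ops_def by auto

lemma additive_rees_single: "additive (rees_single k)"
  by unfold_locales (simp add: rees_single_def fun_eq_iff)

context module
begin

lemma additive_rees_scale: "additive (rees_scale scale r)"
  by unfold_locales (simp add: rees_scale_def fun_eq_iff scale_right_distrib)

lemma additive_rees_shift: "additive (rees_shift scale a)"
  by unfold_locales (simp add: rees_shift_def fun_eq_iff scale_right_distrib split: nat.split)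

lemma additive_rees_ops: "g \<in> rees_ops scale as \<Longrightarrow> additive g"
  unfolding rees_ops_def using additive_rees_scale additive_rees_shift by blast

lemma rees_ops_commute_shift:
  "g \<in> rees_ops scale as \<Longrightarrow> g (rees_shift scale a x) = rees_shift scale a (g x)"
  unfolding rees_ops_def
  by (auto simp: rees_scale_def rees_shift_def fun_eq_iff mult.commute split: nat.split)

lemma rees_scale_single: "rees_scale scale r (rees_single k x) = rees_single k (scale r x)"
  by (simp add: rees_scale_def rees_single_def fun_eq_iff)

lemma rees_shift_single: "rees_shift scale a (rees_single k x) = rees_single (Suc k) (scale a x)"
  by (simp add: rees_shift_def rees_single_def fun_eq_iff split: nat.split)

lemma op_subgroup_rees_ops_pointwise:
  assumes "\<And>n. subspace (P n)" and "\<And>a n x. a \<in> set as \<Longrightarrow> x \<in> P n \<Longrightarrow> scale a x \<in> P (Suc n)"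
  shows "op_subgroup (rees_ops scale as) {g. \<forall>n. g n \<in> P n}"
proof (rule op_subgroupI)
  fix g x assume "g \<in> rees_ops scale as" and x: "x \<in> {g. \<forall>n. g n \<in> P n}"
  then consider r where "g = rees_scale scale r" | a where "a \<in> set as" "g = rees_shift scale a"
    unfolding rees_ops_def by blast
  then show "g x \<in> {g. \<forall>n. g n \<in> P n}"
  proof cases
    case 1
    then show ?thesis using x subspace_scale[OF assms(1)] by (simp add: rees_scale_def)
  next
    case 2
    then show ?thesis using x assms(2) subspace_0[OF assms(1)] by (simp add: rees_shift_def split: nat.split)
  qed
qed (use subspace_0[OF assms(1)] subspace_add[OF assms(1)] subspace_neg[OF assms(1)] in auto)

lemma op_subgroup_finite_support: "op_subgroup (rees_ops scale as) {g. finite {n. g n \<noteq> 0}}"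
proof (rule op_subgroupI)
  fix x y :: "nat \<Rightarrow> 'b" assume "x \<in> {g. finite {n. g n \<noteq> 0}}" "y \<in> {g. finite {n. g n \<noteq> 0}}"
  moreover have "{n. (x + y) n \<noteq> 0} \<subseteq> {n. x n \<noteq> 0} \<union> {n. y n \<noteq> 0}" by auto
  ultimately show "x + y \<in> {g. finite {n. g n \<noteq> 0}}" using finite_subset by blast
next
  fix g and x :: "nat \<Rightarrow> 'b" assume "g \<in> rees_ops scale as" and x: "x \<in> {g. finite {n. g n \<noteq> 0}}"
  then consider r where "g = rees_scale scale r" | a where "g = rees_shift scale a"
    unfolding rees_ops_def by blast
  then show "g x \<in> {g. finite {n. g n \<noteq> 0}}"
  proof cases
    case 1
    have "{n. g x n \<noteq> 0} \<subseteq> {n. x n \<noteq> 0}" unfolding 1 rees_scale_def by auto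
    then show ?thesis using x finite_subset by blast
  next
    case 2
    have "{n. g x n \<noteq> 0} \<subseteq> Suc ` {n. x n \<noteq> 0}"
    proof
      fix n assume "n \<in> {n. g x n \<noteq> 0}"
      then show "n \<in> Suc ` {n. x n \<noteq> 0}" unfolding 2 rees_shift_def by (cases n) auto
    qed
    then show ?thesis using x finite_subset by blast
  qed
qed simp_all

lemma op_subgroup_rees_module: "op_subgroup (rees_ops scale as) (rees_module scale as)"
  unfolding rees_module_def by (rule op_subgroup_op_span)

lemma rees_module_Nil: "rees_module scale [] = range (rees_single 0)"
proof -
  have "op_subgroup (rees_ops scale []) (range (rees_single 0))"
  proof (rule op_subgroup_image[OF additive_rees_single])
    show "\<exists>g\<in>range scale. \<forall>x. g' (rees_single 0 x) = rees_single 0 (g x)"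
      if "g' \<in> rees_ops scale []" for g'
      using that rees_scale_single unfolding rees_ops_def by auto
  qed (simp add: op_subgroup_range_scale_iff)
  then show ?thesis unfolding rees_module_def by (rule op_span_eq)
qed

lemma op_noetherian_rees_module:
  assumes "op_noetherian (range scale) UNIV"
  shows "op_noetherian (rees_ops scale as) (rees_module scale as)"
proof (induction as)
  case Nil
  have "op_noetherian (rees_ops scale []) (rees_single 0 ` UNIV)"
  proof (rule op_noetherian_image[OF additive_rees_single _ _ assms])
    show "\<exists>g'\<in>rees_ops scale []. \<forall>x. rees_single 0 (g x) = g' (rees_single 0 x)"
      if "g \<in> range scale" for g
      using that rees_scale_single unfolding rees_ops_def by auto
  qed (simp add: op_subgroup_range_scale_iff)
  then show ?case by (simp add: rees_module_Nil)
next
  case (Cons a as)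
  interpret operator_extension "rees_ops scale as" "rees_shift scale a" "rees_module scale as"
    by (intro operator_extension.intro)
      (simp_all add: additive_rees_ops additive_rees_shift rees_ops_commute_shift op_subgroup_rees_module)
  show ?case
    using op_noetherian_op_span_insert[OF Cons.IH]
    by (simp add: rees_module_def rees_ops_Cons op_span_op_span subset_insertI)
qed

lemma rees_module_finite_support: "g \<in> rees_module scale as \<Longrightarrow> finite {n. g n \<noteq> 0}"
  using op_span_minimal[OF _ op_subgroup_finite_support, of "range (rees_single 0)"]
  unfolding rees_module_def by (force simp: rees_single_def)

lemma rees_module_mem_ipow_mod:
  assumes "set as \<subseteq> I" and "g \<in> rees_module scale as"
  shows "g n \<in> ipow_mod scale I n UNIV"
proof -
  have "op_subgroup (rees_ops scale as) {g. \<forall>n. g n \<in> ipow_mod scale I n UNIV}"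
    using assms(1) ipow_mod_Suc_scale by (intro op_subgroup_rees_ops_pointwise subspace_ipow_mod) blast
  moreover have "range (rees_single 0) \<subseteq> {g. \<forall>n. g n \<in> ipow_mod scale I n UNIV}"
    using ipow_mod_0_superset[of UNIV I] subspace_0[OF subspace_ipow_mod] by (auto simp: rees_single_def)
  ultimately show ?thesis
    using assms(2) op_span_minimal unfolding rees_module_def by blast
qed

lemma rees_single_Suc_scale_mem:
  assumes "rees_single n z \<in> rees_module scale as" and "a \<in> module.span (*) (set as)"
  shows "rees_single (Suc n) (scale a z) \<in> rees_module scale as"
proof -
  let ?J = "(\<lambda>a. rees_single (Suc n) (scale a z)) -` rees_module scale as"
  have "op_subgroup (range (*)) ?J"
  proof (rule op_subgroup_vimage[OF _ _ op_subgroup_rees_module])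
    show "additive (\<lambda>a. rees_single (Suc n) (scale a z))"
      by unfold_locales (simp add: additive.add[OF additive_rees_single] scale_left_distrib)
    show "\<exists>g'\<in>rees_ops scale as. \<forall>x. rees_single (Suc n) (scale (g x) z) = g' (rees_single (Suc n) (scale x z))"
      if g: "g \<in> range (*)" for g
    proof -
      obtain r where "g = (*) r" using g by blast
      then show ?thesis
        by (intro bexI[of _ "rees_scale scale r"]) (simp_all add: rees_scale_single rees_ops_def)
    qed
  qed
  moreover have "set as \<subseteq> ?J"
  proof
    fix a assume "a \<in> set as"
    then have "rees_shift scale a (rees_single n z) \<in> rees_module scale as"
      using op_subgroup_apply[OF op_subgroup_rees_module _ assms(1)] unfolding rees_ops_def by blast
    then show "a \<in> ?J" by (simp add: rees_shift_single)
  qed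
  ultimately have "module.span (*) (set as) \<subseteq> ?J"
    by (simp add: module.span_minimal[OF module_mult] module.op_subgroup_range_scale_iff[OF module_mult])
  then show ?thesis using assms(2) by blast
qed

lemma rees_single_mem_rees_module:
  assumes "I = module.span (*) (set as)"
  shows "x \<in> ipow_mod scale I n UNIV \<Longrightarrow> rees_single n x \<in> rees_module scale as"
proof (induction n arbitrary: x)
  case 0
  then show ?case unfolding rees_module_def using op_span_superset by blast
next
  case (Suc n)
  let ?Q = "rees_single (Suc n) -` rees_module scale as"
  have "op_subgroup (range scale) ?Q"
  proof (rule op_subgroup_vimage[OF additive_rees_single _ op_subgroup_rees_module])
    show "\<exists>g'\<in>rees_ops scale as. \<forall>x. rees_single (Suc n) (g x) = g' (rees_single (Suc n) x)"
      if g: "g \<in> range scale" for g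
    proof -
      obtain r where "g = scale r" using g by blast
      then show ?thesis
        by (intro bexI[of _ "rees_scale scale r"]) (simp_all add: rees_scale_single rees_ops_def)
    qed
  qed
  then have Q: "subspace ?Q" by (simp add: op_subgroup_range_scale_iff)
  have "ipow_mod scale I (Suc n) UNIV \<subseteq> ?Q"
  proof (rule ipow_mod_minimal[OF Q])
    fix c y assume c: "c \<in> ideal_pow I (Suc n)"
    have "ideal_pow I (Suc n) \<subseteq> (\<lambda>c. scale c y) -` ?Q"
    proof (rule ideal_pow_Suc_minimal)
      show "module.subspace (*) ((\<lambda>c. scale c y) -` ?Q)"
        by (rule module_hom.subspace_vimage[OF module_hom_scale_left Q])
      fix a b assume "a \<in> I" "b \<in> ideal_pow I n"
      then have "rees_single n (scale b y) \<in> rees_module scale as"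
        by (intro Suc.IH scale_mem_ipow_mod) simp_all
      then have "rees_single (Suc n) (scale a (scale b y)) \<in> rees_module scale as"
        using \<open>a \<in> I\<close> assms by (intro rees_single_Suc_scale_mem) simp_all
      then show "a * b \<in> (\<lambda>c. scale c y) -` ?Q" by simp
    qed
    then show "scale c y \<in> ?Q" using c by blast
  qed
  then show ?case using Suc.prems by blast
qed

lemma rees_submodule_bounded_generators:
  assumes "op_noetherian (range scale) UNIV" and N': "subspace N'"
  obtains W k where "op_span (rees_ops scale as) W = rees_module scale as \<inter> {g. \<forall>n. g n \<in> N'}"
    and "\<And>w n. w \<in> W \<Longrightarrow> k < n \<Longrightarrow> w n = 0"
proof -
  define V where "V = rees_module scale as \<inter> {g. \<forall>n. g n \<in> N'}"
  have "op_subgroup (rees_ops scale as) V"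
    unfolding V_def using N'
    by (intro op_subgroup_Int op_subgroup_rees_module op_subgroup_rees_ops_pointwise)
      (simp_all add: subspace_scale)
  moreover have V_sub: "V \<subseteq> rees_module scale as" unfolding V_def by blast
  ultimately obtain W where W: "finite W" "op_span (rees_ops scale as) W = V"
    using op_noetherian_rees_module[OF assms(1)] unfolding op_noetherian_def by blast
  have "W \<subseteq> V" unfolding W(2)[symmetric] by (rule op_span_superset)
  then have "\<forall>w\<in>W. finite {n. w n \<noteq> 0}" using V_sub rees_module_finite_support by blast
  then have "finite (\<Union>w\<in>W. {n. w n \<noteq> 0})" using W(1) by blast
  then obtain k where "\<forall>n\<in>(\<Union>w\<in>W. {n. w n \<noteq> 0}). n \<le> k"
    unfolding finite_nat_set_iff_bounded_le by blast
  then have "w n = 0" if "w \<in> W" "k < n" for w n using that leD by blast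
  with W(2) show thesis unfolding V_def by (rule that)
qed

lemma op_subgroup_artin_rees_bounds:
  fixes k :: nat
  assumes as_I: "set as \<subseteq> I" and N': "subspace N'"
  defines "P \<equiv> \<lambda>n. if n < k then ipow_mod scale I n UNIV \<inter> N'
    else ipow_mod scale I (n - k) (ipow_mod scale I k UNIV \<inter> N')"
  shows "op_subgroup (rees_ops scale as) {g. \<forall>n. g n \<in> P n}"
proof (rule op_subgroup_rees_ops_pointwise)
  show "subspace (P n)" for n
    unfolding P_def by (simp add: subspace_inter[OF subspace_ipow_mod N'] subspace_ipow_mod)
  fix a n x assume "a \<in> set as" "x \<in> P n"
  then have a: "a \<in> I" using as_I by blast
  show "scale a x \<in> P (Suc n)"
  proof (cases "k \<le> n")
    case True
    then have "scale a x \<in> ipow_mod scale I (Suc (n - k)) (ipow_mod scale I k UNIV \<inter> N')"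
      using \<open>x \<in> P n\<close> ipow_mod_Suc_scale[OF a] by (simp add: P_def)
    then show ?thesis using True by (simp add: P_def Suc_diff_le)
  next
    case False
    then have "x \<in> ipow_mod scale I n UNIV" "x \<in> N'" using \<open>x \<in> P n\<close> by (simp_all add: P_def)
    then have "scale a x \<in> ipow_mod scale I (Suc n) UNIV \<inter> N'"
      using ipow_mod_Suc_scale[OF a] subspace_scale[OF N'] by simp
    moreover have "ipow_mod scale I (Suc n) UNIV \<inter> N' \<subseteq> P (Suc n)"
      using False ipow_mod_0_superset by (cases "Suc n = k") (simp_all add: P_def)
    ultimately show ?thesis by blast
  qed
qed

lemma rees_submodule_degree_bound:
  assumes "op_noetherian (range scale) UNIV" and as_I: "set as \<subseteq> I" and N': "subspace N'"
  obtains k where "\<And>g n. g \<in> rees_module scale as \<Longrightarrow> (\<forall>i. g i \<in> N') \<Longrightarrow> k \<le> n \<Longrightarrow>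
    g n \<in> ipow_mod scale I (n - k) (ipow_mod scale I k UNIV \<inter> N')"
proof -
  obtain W k where W: "op_span (rees_ops scale as) W = rees_module scale as \<inter> {g. \<forall>n. g n \<in> N'}"
    and k: "\<And>w n. w \<in> W \<Longrightarrow> k < n \<Longrightarrow> w n = 0"
    using rees_submodule_bounded_generators[OF assms(1) N'] by metis
  define P where "P n = (if n < k then ipow_mod scale I n UNIV \<inter> N'
    else ipow_mod scale I (n - k) (ipow_mod scale I k UNIV \<inter> N'))" for n
  have W_sub: "W \<subseteq> rees_module scale as \<inter> {g. \<forall>n. g n \<in> N'}"
    unfolding W[symmetric] by (rule op_span_superset)
  have "W \<subseteq> {g. \<forall>n. g n \<in> P n}"
  proof (intro subsetI CollectI allI)
    fix w n assume w: "w \<in> W"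
    then have wn: "w n \<in> ipow_mod scale I n UNIV \<inter> N'"
      using W_sub rees_module_mem_ipow_mod[OF as_I] by blast
    consider "n < k" | "n = k" | "k < n" by linarith
    then show "w n \<in> P n"
    proof cases
      case 1
      then show ?thesis using wn by (simp add: P_def)
    next
      case 2
      then show ?thesis
        using wn ipow_mod_0_superset[of "ipow_mod scale I k UNIV \<inter> N'" I] by (auto simp: P_def)
    next
      case 3
      then show ?thesis using k[OF w 3] subspace_0[OF subspace_ipow_mod] by (simp add: P_def)
    qed
  qed
  moreover have "op_subgroup (rees_ops scale as) {g. \<forall>n. g n \<in> P n}"
    unfolding P_def by (rule op_subgroup_artin_rees_bounds[OF as_I N'])
  ultimately have V: "rees_module scale as \<inter> {g. \<forall>n. g n \<in> N'} \<subseteq> {g. \<forall>n. g n \<in> P n}"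
    unfolding W[symmetric] by (rule op_span_minimal)
  show thesis
  proof (rule that)
    fix g n assume "g \<in> rees_module scale as" "\<forall>i. g i \<in> N'" "k \<le> n"
    then have "g n \<in> P n" using V by blast
    then show "g n \<in> ipow_mod scale I (n - k) (ipow_mod scale I k UNIV \<inter> N')"
      using \<open>k \<le> n\<close> by (simp add: P_def)
  qed
qed

end

definition artin_rees_from :: "('r::comm_ring_1 \<Rightarrow> 'n::ab_group_add \<Rightarrow> 'n) \<Rightarrow> 'r set \<Rightarrow> 'n set \<Rightarrow> nat \<Rightarrow> bool" where
  "artin_rees_from s I N' k \<longleftrightarrow>
     (\<forall>n\<ge>k. ipow_mod s I n UNIV \<inter> N' = ipow_mod s I (n - k) (ipow_mod s I k UNIV \<inter> N'))"

lemma AR_number_eq_Least: "AR_number s I N' = (LEAST k. artin_rees_from s I N' k)"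
  unfolding AR_number_def artin_rees_from_def ..

lemma (in module) artin_rees:
  assumes "op_noetherian (range scale) UNIV" and I: "I = module.span (*) (set as)"
    and N': "subspace N'"
  shows "\<exists>k. artin_rees_from scale I N' k"
proof -
  have as_I: "set as \<subseteq> I" unfolding I by (rule module.span_superset[OF module_mult])
  obtain k where k: "\<And>g n. g \<in> rees_module scale as \<Longrightarrow> (\<forall>i. g i \<in> N') \<Longrightarrow> k \<le> n \<Longrightarrow>
      g n \<in> ipow_mod scale I (n - k) (ipow_mod scale I k UNIV \<inter> N')"
    using rees_submodule_degree_bound[OF assms(1) as_I N'] by metis
  have "ipow_mod scale I n UNIV \<inter> N' = ipow_mod scale I (n - k) (ipow_mod scale I k UNIV \<inter> N')"
    if n: "k \<le> n" for n
  proof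
    show "ipow_mod scale I n UNIV \<inter> N' \<subseteq> ipow_mod scale I (n - k) (ipow_mod scale I k UNIV \<inter> N')"
    proof
      fix y assume y: "y \<in> ipow_mod scale I n UNIV \<inter> N'"
      have "rees_single n y \<in> rees_module scale as"
        using y by (intro rees_single_mem_rees_module[OF I]) simp
      moreover have "\<forall>i. rees_single n y i \<in> N'"
        using y subspace_0[OF N'] by (simp add: rees_single_def)
      ultimately have "rees_single n y n \<in> ipow_mod scale I (n - k) (ipow_mod scale I k UNIV \<inter> N')"
        using n by (rule k)
      then show "y \<in> ipow_mod scale I (n - k) (ipow_mod scale I k UNIV \<inter> N')"
        by (simp add: rees_single_def)
    qed
    have "ipow_mod scale I (n - k) (ipow_mod scale I k UNIV \<inter> N') \<subseteq>
        ipow_mod scale I (n - k) (ipow_mod scale I k UNIV)"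
      by (rule ipow_mod_mono) blast
    also have "\<dots> \<subseteq> ipow_mod scale I n UNIV"
      using ipow_mod_ipow_mod_subset[of I "n - k" k UNIV] n by simp
    finally have "ipow_mod scale I (n - k) (ipow_mod scale I k UNIV \<inter> N') \<subseteq> ipow_mod scale I n UNIV" .
    moreover have "ipow_mod scale I (n - k) (ipow_mod scale I k UNIV \<inter> N') \<subseteq> N'"
      using ipow_mod_mono[of "ipow_mod scale I k UNIV \<inter> N'" N' I "n - k"] ipow_mod_subset[OF N']
      by blast
    ultimately show "ipow_mod scale I (n - k) (ipow_mod scale I k UNIV \<inter> N') \<subseteq>
        ipow_mod scale I n UNIV \<inter> N'"
      by (rule Int_greatest)
  qed
  then show ?thesis unfolding artin_rees_from_def by blast
qed

lemma artin_rees_from_AR_number: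
  fixes s :: "'r::comm_ring_1 \<Rightarrow> 'n::ab_group_add \<Rightarrow> 'n"
  assumes "noetherian_ring TYPE('r)" and "ring_ideal I" and "module s" and "fin_gen_module s"
    and "module.subspace s N'"
  shows "artin_rees_from s I N' (AR_number s I N')"
proof -
  obtain S where "finite S" "module.span (*) S = I" using assms(1,2) unfolding noetherian_ring_def by blast
  then obtain as where "I = module.span (*) (set as)" using finite_list by metis
  then have "\<exists>k. artin_rees_from s I N' k"
    by (rule module.artin_rees[OF assms(3) op_noetherian_fin_gen_module[OF assms(3,1,4)] _ assms(5)])
  then show ?thesis unfolding AR_number_eq_Least by (rule LeastI_ex)
qed

section \<open>Perturbing a homomorphism\<close>

context module
begin

lemma subspace_set_sum: "subspace A \<Longrightarrow> subspace B \<Longrightarrow> subspace (set_sum A B)"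
  using op_subgroup_set_sum_range_scale op_subgroup_range_scale_iff by blast

lemma subspace_initial_comp: "subspace L \<Longrightarrow> subspace (initial_comp scale m L p)"
  unfolding initial_comp_def by (intro subspace_set_sum subspace_inter subspace_ipow_mod)

lemma ipow_mod_Suc_subset_initial_comp:
  assumes "subspace L"
  shows "ipow_mod scale m (Suc p) UNIV \<subseteq> initial_comp scale m L p"
proof
  fix z assume "z \<in> ipow_mod scale m (Suc p) UNIV"
  moreover have "0 \<in> L \<inter> ipow_mod scale m p UNIV"
    using subspace_0[OF assms] subspace_0[OF subspace_ipow_mod] by blast
  ultimately have "0 + z \<in> initial_comp scale m L p" unfolding initial_comp_def by (intro set_sumI)
  then show "z \<in> initial_comp scale m L p" by simp
qed

lemma quot_iso_refl: "subspace B \<Longrightarrow> quot_iso scale A B A B"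
  unfolding quot_iso_def
proof (intro exI[of _ id] conjI ballI allI impI)
  assume B: "subspace B"
  fix x y a b assume "a \<in> id (coset x B)" "b \<in> id (coset y B)"
  then obtain q q' where "a = x + q" "b = y + q'" "q \<in> B" "q' \<in> B" unfolding coset_def by auto
  then show "a + b \<in> id (coset (x + y) B)"
    unfolding coset_def using subspace_add[OF B] by (auto intro!: exI[of _ "q + q'"] simp: algebra_simps)
next
  assume B: "subspace B"
  fix x r a assume "a \<in> id (coset x B)"
  then obtain q where "a = x + q" "q \<in> B" unfolding coset_def by auto
  then show "scale r a \<in> id (coset (scale r x) B)"
    unfolding coset_def using subspace_scale[OF B]
    by (auto intro!: exI[of _ "scale r q"] simp: scale_right_distrib)
qed simp

lemma graded_subquotient_if_initial_comp_subset:
  assumes "subspace L1" and "\<And>p. initial_comp scale m L1 p \<subseteq> initial_comp scale m L2 p"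
  shows "graded_subquotient scale m L1 L2"
  unfolding graded_subquotient_def
proof
  fix p
  show "\<exists>A B. subspace A \<and> subspace B \<and> ipow_mod scale m (Suc p) UNIV \<subseteq> B \<and> B \<subseteq> A \<and>
      A \<subseteq> initial_comp scale m L2 p \<and>
      quot_iso scale (initial_comp scale m L1 p) (ipow_mod scale m (Suc p) UNIV) A B"
    by (intro exI[of _ "initial_comp scale m L1 p"] exI[of _ "ipow_mod scale m (Suc p) UNIV"] conjI
        subspace_initial_comp[OF assms(1)] subspace_ipow_mod ipow_mod_Suc_subset_initial_comp[OF assms(1)]
        assms(2) quot_iso_refl order_refl)
qed

end

lemma artin_rees_lift:
  assumes f: "module_hom sM sN f" and AR: "artin_rees_from sN m (range f) K"
    and x: "f x \<in> ipow_mod sN m (q + K) UNIV"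
  obtains w where "w \<in> ipow_mod sM m q UNIV" and "f w = f x"
proof -
  interpret module_hom sM sN f by (fact f)
  have "f x \<in> ipow_mod sN m (q + K) UNIV \<inter> range f" using x by simp
  also have "\<dots> = ipow_mod sN m (q + K - K) (ipow_mod sN m K UNIV \<inter> range f)"
    by (rule AR[unfolded artin_rees_from_def, rule_format]) simp
  also have "\<dots> = ipow_mod sN m q (ipow_mod sN m K UNIV \<inter> range f)" by simp
  also have "\<dots> \<subseteq> ipow_mod sN m q (f ` UNIV)" by (rule m2.ipow_mod_mono) blast
  also have "\<dots> = f ` ipow_mod sM m q UNIV" by (rule ipow_mod_image[OF f, symmetric])
  finally obtain w where "w \<in> ipow_mod sM m q UNIV" "f x = f w" by blast
  then show thesis by (intro that) simp_all
qed

lemma initial_comp_perturbed_kernel_subset: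
  assumes f: "module_hom sM sN f" and \<epsilon>: "module_hom sM sN \<epsilon>"
    and AR: "artin_rees_from sN m (range f) K" and \<epsilon>_range: "range \<epsilon> \<subseteq> ipow_mod sN m (1 + K) UNIV"
  shows "initial_comp sM m {x. f x + \<epsilon> x = 0} p \<subseteq> initial_comp sM m {x. f x = 0} p"
proof
  interpret M: module sM using f by (rule module_hom.axioms)
  interpret N: module sN using f by (rule module_hom.axioms)
  fix y assume "y \<in> initial_comp sM m {x. f x + \<epsilon> x = 0} p"
  then obtain x z where y: "y = x + z" "f x + \<epsilon> x = 0" "x \<in> ipow_mod sM m p UNIV"
      "z \<in> ipow_mod sM m (Suc p) UNIV"
    unfolding initial_comp_def by (elim set_sumE) auto
  have "\<epsilon> x \<in> ipow_mod sN m p (range \<epsilon>)"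
    using ipow_mod_image[OF \<epsilon>, of m p UNIV] y(3) by blast
  also have "\<dots> \<subseteq> ipow_mod sN m p (ipow_mod sN m (1 + K) UNIV)" by (rule N.ipow_mod_mono[OF \<epsilon>_range])
  also have "\<dots> \<subseteq> ipow_mod sN m (p + (1 + K)) UNIV" by (rule N.ipow_mod_ipow_mod_subset)
  finally have "- \<epsilon> x \<in> ipow_mod sN m (p + (1 + K)) UNIV"
    by (rule N.subspace_neg[OF N.subspace_ipow_mod])
  moreover have "f x = - \<epsilon> x" using y(2) by (simp add: eq_neg_iff_add_eq_0)
  ultimately have "f x \<in> ipow_mod sN m (Suc p + K) UNIV" by simp
  then obtain w where w: "w \<in> ipow_mod sM m (Suc p) UNIV" "f w = f x" by (rule artin_rees_lift[OF f AR])
  have "f (x - w) = 0" using w(2) module_hom.diff[OF f] by simp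
  moreover have "x - w \<in> ipow_mod sM m p UNIV"
    using M.subspace_diff[OF M.subspace_ipow_mod y(3)] w(1) M.ipow_mod_Suc_subset by blast
  ultimately have "x - w \<in> {x. f x = 0} \<inter> ipow_mod sM m p UNIV" by simp
  moreover have "w + z \<in> ipow_mod sM m (Suc p) UNIV" by (rule M.subspace_add[OF M.subspace_ipow_mod w(1) y(4)])
  ultimately have "(x - w) + (w + z) \<in> initial_comp sM m {x. f x = 0} p"
    unfolding initial_comp_def by (rule set_sumI)
  then show "y \<in> initial_comp sM m {x. f x = 0} p" using y(1) by simp
qed

theorem corollary2p6:
  fixes m :: "'r::comm_ring_1 set"
    and sM :: "'r \<Rightarrow> 'm::ab_group_add \<Rightarrow> 'm"
    and sN :: "'r \<Rightarrow> 'n::ab_group_add \<Rightarrow> 'n"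
    and f \<epsilon> :: "'m \<Rightarrow> 'n"
  assumes "noetherian_ring TYPE('r)"
    and "local_ring m"
    and "module sM" and "module sN"
    and "fin_gen_module sM" and "fin_gen_module sN"
    and "module_hom sM sN f"
    and "module_hom sM sN \<epsilon>"
    and "range \<epsilon> \<subseteq> ipow_mod sN m (1 + AR_number sN m (range f)) UNIV"
  shows "graded_subquotient sM m {x. f x + \<epsilon> x = 0} {x. f x = 0}"
proof -
  have "ring_ideal m" using assms(2) unfolding local_ring_def by blast
  moreover have "module.subspace sN (range f)"
    using module_hom.subspace_image[OF assms(7) module.subspace_UNIV[OF assms(3)]] by simp
  ultimately have AR: "artin_rees_from sN m (range f) (AR_number sN m (range f))"
    by (rule artin_rees_from_AR_number[OF assms(1) _ assms(4,6)])
  have "module.subspace sM {x. f x + \<epsilon> x = 0}"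
    using module_hom.subspace_kernel[OF module_pair.module_hom_add[OF _ assms(7,8)]] assms(3,4)
    by (simp add: module_pair_def)
  then show ?thesis
    using initial_comp_perturbed_kernel_subset[OF assms(7,8) AR assms(9)]
    by (rule module.graded_subquotient_if_initial_comp_subset[OF assms(3)])
qed

end
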